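(* Let $E$ be an infinite dimensional separable real Hilbert space, let $\mu,\nu\in\mathcal{W}_2(E)$, and put $\sigma:=d_{\mathcal{W}_2}(\mu,\delta_{m(\mu)})$ and $\varrho:=d_{\mathcal{W}_2}(\nu,\delta_{m(\nu)})$. Then $$d_{\mathcal{W}_2}^2(\mu,\nu)=\|m(\mu)-m(\nu)\|^2+\sigma^2+\varrho^2$$ holds if and only if there exist two orthogonal closed affine subspaces $L$ and $M$ of $E$ with $\mathrm{supp}(\mu)\subseteq L$ and $\mathrm{supp}(\nu)\subseteq M$.
   Context: $\mathcal{W}_2(E)$ is the set of Borel probability measures $\mu$ on $E$ with $\int_E\|x\|^2\,d\mu(x)<\infty$, with $d_{\mathcal{W}_2}(\mu,\nu)=\big(\inf_{\pi\in\Pi(\mu,\nu)}\int_{E\times E}\|x-y\|^2\,d\pi(x,y)\big)^{1/2}$, $\Pi(\mu,\nu)$ the set of couplings of $\mu,\nu$. The barycenter $m(\mu)\in E$ is the point with $\langle m(\mu),z\rangle=\int_E\langle x,z\rangle\,d\mu(x)$ for all $z\in E$. The support $\mathrm{supp}(\mu)$ is the smallest closed set every open neighbourhood of each of whose points has positive measure. Two affine subspaces $a+L_0$, $b+M_0$ ($L_0,M_0$ closed linear subspaces) are orthogonal if $L_0\perp M_0$. *)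

theory Defs
  imports "HOL-Analysis.Analysis" "HOL-Probability.Probability"
begin

definition separable_space :: "'a::metric_space itself \<Rightarrow> bool" where
  "separable_space _ \<longleftrightarrow> (\<exists>D::'a set. countable D \<and> closure D = UNIV)"

definition infinite_dimensional :: "'a::real_vector itself \<Rightarrow> bool" where
  "infinite_dimensional _ \<longleftrightarrow> \<not> (\<exists>B::'a set. finite B \<and> span B = UNIV)"

definition W2 :: "'a::real_inner measure set" where
  "W2 = {\<mu>. sets \<mu> = sets borel \<and> prob_space \<mu> \<and> integrable \<mu> (\<lambda>x. (norm x)^2)}"

definition couplings :: "'a::real_inner measure \<Rightarrow> 'a measure \<Rightarrow> ('a \<times> 'a) measure set" where
  "couplings \<mu> \<nu> = {\<pi>. sets \<pi> = sets (borel \<Otimes>\<^sub>M borel) \<and> prob_space \<pi> \<and>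
      distr \<pi> borel fst = \<mu> \<and> distr \<pi> borel snd = \<nu>}"

definition wdist :: "'a::real_inner measure \<Rightarrow> 'a measure \<Rightarrow> real" where
  "wdist \<mu> \<nu> = sqrt (enn2real (INF \<pi>\<in>couplings \<mu> \<nu>.
      \<integral>\<^sup>+ p. ennreal ((norm (fst p - snd p))^2) \<partial>\<pi>))"

definition bary :: "'a::real_inner measure \<Rightarrow> 'a" where
  "bary \<mu> = (THE m. \<forall>z. m \<bullet> z = (\<integral>x. x \<bullet> z \<partial>\<mu>))"

definition supp :: "'a::topological_space measure \<Rightarrow> 'a set" where
  "supp \<mu> = {x. \<forall>U. open U \<and> x \<in> U \<longrightarrow> emeasure \<mu> U > 0}"

end

theory Submission
  imports Defs
begin

text \<open>
  For a coupling \<open>\<pi>\<close> of \<open>\<mu>\<close> and \<open>\<nu>\<close> with barycentres \<open>m\<close> and \<open>n\<close>, expanding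
  \<open>|x - y|\<^sup>2\<close> around the barycentres gives the transport cost
  \<open>|m - n|\<^sup>2 + \<sigma>\<^sup>2 + \<rho>\<^sup>2 - 2 C(\<pi>)\<close> with the cross covariance
  \<open>C(\<pi>) = \<integral> (x - m) \<bullet> (y - n) d\<pi>\<close>. The product coupling has \<open>C = 0\<close>, so the identity
  holds iff no coupling has positive cross covariance.
  If \<open>(x - m) \<bullet> (y - n) = 0\<close> on \<open>supp \<mu> \<times> supp \<nu>\<close>, then \<open>C\<close> vanishes for every coupling,
  which is concentrated on that set. Otherwise some support points \<open>x0, y0\<close> violate it, and
  perturbing \<open>\<mu> \<Otimes> \<nu>\<close> by a density that keeps the marginals and moves mass into a small
  neighbourhood of \<open>(x0, y0)\<close> gives \<open>C > 0\<close>. Orthogonality of the centred supports is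
  equivalent to the supports lying in orthogonal closed affine subspaces: take the orthogonal
  complement of \<open>supp \<nu> - n\<close> and its own complement; conversely the barycentres inherit the
  orthogonality of the supports.

  Completeness yields the barycentre through the Riesz representation; separability makes the
  inner product measurable for the product \<open>\<sigma>\<close>-algebra and puts full mass on the support.
\<close>

section \<open>Riesz representation\<close>

lemma parallelogram_attains_Inf:
  fixes J :: "'a::{real_inner,complete_space} \<Rightarrow> real"
  assumes bdd: "bdd_below (range J)" and cont: "\<And>x. isCont J x"
    and parallelogram: "\<And>x y. (norm (x - y))\<^sup>2 = 2 * J x + 2 * J y - 4 * J ((1/2) *\<^sub>R (x + y))"
  obtains m where "\<And>x. J m \<le> J x"
proof -
  define I where "I = (INF x. J x)"
  have I_le: "I \<le> J x" for x unfolding I_def using bdd by (simp add: cINF_lower)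
  have "\<exists>x. J x < I + 1 / (real n + 1)" for n
    using cInf_lessD[of "range J" "I + 1 / (real n + 1)"] unfolding I_def by auto
  then obtain xs where xs: "\<And>n. J (xs n) < I + 1 / (real n + 1)" by metis
  have close: "(norm (xs i - xs j))\<^sup>2 \<le> 2 / (real i + 1) + 2 / (real j + 1)" for i j
    using parallelogram[of "xs i" "xs j"] xs[of i] xs[of j] I_le[of "(1/2) *\<^sub>R (xs i + xs j)"]
    by linarith
  have "Cauchy xs"
  proof (rule metric_CauchyI)
    fix e :: real assume "e > 0"
    obtain N :: nat where "4 / e\<^sup>2 < real N" using reals_Archimedean2 by blast
    then have N: "4 / e\<^sup>2 < real N + 1" by linarith
    have "dist (xs i) (xs j) < e" if "N \<le> i" "N \<le> j" for i j
    proof -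
      have "2 / (real i + 1) \<le> 2 / (real N + 1)" "2 / (real j + 1) \<le> 2 / (real N + 1)"
        using that by (auto intro!: divide_left_mono)
      moreover have "4 / (real N + 1) < e\<^sup>2" using N \<open>e > 0\<close> by (simp add: field_simps)
      ultimately have "(norm (xs i - xs j))\<^sup>2 < e\<^sup>2" using close[of i j] by linarith
      then show ?thesis using \<open>e > 0\<close> by (simp add: dist_norm power_less_imp_less_base)
    qed
    then show "\<exists>N. \<forall>i\<ge>N. \<forall>j\<ge>N. dist (xs i) (xs j) < e" by blast
  qed
  then obtain m where "xs \<longlonglongrightarrow> m" using Cauchy_convergent_iff convergent_def by blast
  have "J m \<le> J x" for x
  proof (rule LIMSEQ_le[OF isCont_tendsto_compose[OF cont \<open>xs \<longlonglongrightarrow> m\<close>]])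
    show "(\<lambda>n. J x + 1 / (real n + 1)) \<longlonglongrightarrow> J x"
      using tendsto_add[OF tendsto_const LIMSEQ_inverse_real_of_nat_add[of 0]]
      by (simp add: inverse_eq_divide add.commute)
    show "\<exists>N. \<forall>n\<ge>N. J (xs n) \<le> J x + 1 / (real n + 1)"
      using xs I_le[of x] by (metis less_imp_le add_le_cancel_right order.strict_trans2)
  qed
  then show ?thesis using that by blast
qed

lemma bounded_linear_energy_minimizer:
  fixes l :: "'a::{real_inner,complete_space} \<Rightarrow> real"
  assumes l: "bounded_linear l"
  obtains m where "\<And>x. m \<bullet> m - 2 * l m \<le> x \<bullet> x - 2 * l x"
proof (rule parallelogram_attains_Inf)
  interpret l: bounded_linear l by (rule l)
  obtain K where K: "\<And>x. norm (l x) \<le> norm x * K" using l.bounded by blast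
  have "- (K\<^sup>2) \<le> x \<bullet> x - 2 * l x" for x
  proof -
    have "l x \<le> norm x * K" using K[of x] by simp
    moreover have "0 \<le> (norm x - K)\<^sup>2" by simp
    ultimately show ?thesis
      unfolding power2_norm_eq_inner[symmetric] power2_diff by (simp add: algebra_simps)
  qed
  then show "bdd_below (range (\<lambda>x. x \<bullet> x - 2 * l x))" by (intro bdd_belowI2) auto
  show "isCont (\<lambda>x. x \<bullet> x - 2 * l x) x" for x
    by (intro continuous_intros l.isCont)
  show "(norm (x - y))\<^sup>2 = 2 * (x \<bullet> x - 2 * l x) + 2 * (y \<bullet> y - 2 * l y)
      - 4 * ((1/2) *\<^sub>R (x + y) \<bullet> (1/2) *\<^sub>R (x + y) - 2 * l ((1/2) *\<^sub>R (x + y)))" for x y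
    unfolding power2_norm_eq_inner
    by (simp add: l.add l.scale inner_diff_left inner_diff_right inner_add_left inner_add_right
        inner_commute algebra_simps)
qed (use that in blast)

lemma riesz_representation:
  fixes l :: "'a::{real_inner,complete_space} \<Rightarrow> real"
  assumes l: "bounded_linear l"
  obtains m where "\<And>z. m \<bullet> z = l z"
proof -
  interpret l: bounded_linear l by (rule l)
  obtain m where min: "\<And>x. m \<bullet> m - 2 * l m \<le> x \<bullet> x - 2 * l x"
    using bounded_linear_energy_minimizer[OF l] by blast
  have "m \<bullet> z = l z" for z
  proof (rule ccontr)
    define a where "a = m \<bullet> z - l z"
    assume "m \<bullet> z \<noteq> l z"
    then have "a \<noteq> 0" unfolding a_def by simp
    define b where "b = z \<bullet> z"
    have "b \<ge> 0" unfolding b_def by simp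
    \<comment> \<open>the energy at \<open>m + t z\<close> exceeds the minimum by \<open>2 t a + t\<^sup>2 b\<close>, negative for this \<open>t\<close>\<close>
    define t where "t = - a / (b + 1)"
    have tb: "t * (b + 1) = - a" unfolding t_def using \<open>b \<ge> 0\<close> by simp
    have "0 \<le> 2 * t * a + t\<^sup>2 * b"
      using min[of "m + t *\<^sub>R z"]
      by (simp add: a_def b_def l.add l.scale inner_add_left inner_add_right inner_commute
          algebra_simps power2_eq_square)
    moreover have "(b + 1)\<^sup>2 * (2 * t * a + t\<^sup>2 * b) = 2 * a * (t * (b + 1)) * (b + 1) + (t * (b + 1))\<^sup>2 * b"
      by (simp add: algebra_simps power2_eq_square)
    also have "\<dots> = - (a\<^sup>2 * (b + 2))" unfolding tb by (simp add: algebra_simps power2_eq_square)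
    also have "\<dots> < 0" using \<open>a \<noteq> 0\<close> \<open>b \<ge> 0\<close> by (simp add: add_nonneg_pos)
    ultimately show False using \<open>b \<ge> 0\<close> by (simp add: mult_less_0_iff)
  qed
  then show ?thesis using that by blast
qed

section \<open>Separable metric spaces\<close>

lemma separable_space_countable_dense:
  assumes "separable_space TYPE('a::metric_space)"
  obtains D :: "'a::metric_space set" where "countable D" "\<And>x e. e > 0 \<Longrightarrow> \<exists>d\<in>D. dist d x < e"
  using assms closure_approachable unfolding separable_space_def by (metis UNIV_I)

lemma dist_eq_INF_dense:
  fixes x y :: "'a::metric_space"
  assumes D: "\<And>x e. e > 0 \<Longrightarrow> \<exists>d\<in>D. dist d x < e"
  shows "dist x y = (INF d\<in>D. dist x d + dist d y)"
proof (rule antisym)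
  have "D \<noteq> {}" using D[of 1 x] by auto
  show "dist x y \<le> (INF d\<in>D. dist x d + dist d y)"
    using \<open>D \<noteq> {}\<close> by (rule cINF_greatest) (rule dist_triangle)
  show "(INF d\<in>D. dist x d + dist d y) \<le> dist x y"
  proof (rule field_le_epsilon)
    fix e :: real assume "e > 0"
    then obtain d where "d \<in> D" "dist d x < e / 2" using D[of "e / 2"] by auto
    moreover have "bdd_below ((\<lambda>d. dist x d + dist d y) ` D)"
      by (rule bdd_belowI2[of _ 0]) simp
    ultimately have "(INF d\<in>D. dist x d + dist d y) \<le> dist x d + dist d y"
      by (intro cINF_lower)
    also have "\<dots> \<le> 2 * dist d x + dist x y"
      using dist_triangle[of d y x] by (simp add: dist_commute)
    finally show "(INF d\<in>D. dist x d + dist d y) \<le> dist x y + e"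
      using \<open>dist d x < e / 2\<close> by linarith
  qed
qed

text \<open>Without separability the product of the Borel \<sigma>-algebras may be too coarse for the
  distance to be measurable; a countable dense set writes it as a countable infimum.\<close>

lemma borel_measurable_dist_separable:
  fixes f g :: "'b \<Rightarrow> 'a::metric_space"
  assumes "separable_space TYPE('a)" "f \<in> borel_measurable M" "g \<in> borel_measurable M"
  shows "(\<lambda>w. dist (f w) (g w)) \<in> borel_measurable M"
proof -
  obtain D :: "'a set" where [simp]: "countable D" and D: "\<And>x e. e > 0 \<Longrightarrow> \<exists>d\<in>D. dist d x < e"
    using separable_space_countable_dense[OF assms(1)] by blast
  have "(\<lambda>w. INF d\<in>D. dist (f w) d + dist d (g w)) \<in> borel_measurable M"
    by (intro borel_measurable_cINF_real borel_measurable_add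
        borel_measurable_continuous_on[OF _ assms(2)] borel_measurable_continuous_on[OF _ assms(3)]
        continuous_intros) simp
  then show ?thesis by (simp add: dist_eq_INF_dense[OF D, symmetric])
qed

lemma borel_measurable_inner_separable:
  fixes f g :: "'b \<Rightarrow> 'a::real_inner"
  assumes "separable_space TYPE('a)"
    and [measurable]: "f \<in> borel_measurable M" "g \<in> borel_measurable M"
  shows "(\<lambda>w. f w \<bullet> g w) \<in> borel_measurable M"
proof -
  have polarization: "f w \<bullet> g w = ((norm (f w))\<^sup>2 + (norm (g w))\<^sup>2 - (dist (f w) (g w))\<^sup>2) / 2" for w
    by (simp add: dist_norm power2_norm_eq_inner inner_diff_left inner_diff_right inner_commute)
  have [measurable]: "(\<lambda>w. dist (f w) (g w)) \<in> borel_measurable M"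
    by (rule borel_measurable_dist_separable[OF assms])
  show ?thesis unfolding polarization by measurable
qed

lemma closed_supp: "closed (supp \<mu>)"
proof -
  have "open (- supp \<mu>)"
  proof (rule Topological_Spaces.openI)
    fix x assume "x \<in> - supp \<mu>"
    then obtain U where "open U" "x \<in> U" "emeasure \<mu> U = 0" unfolding supp_def by auto
    moreover from this have "U \<subseteq> - supp \<mu>" unfolding supp_def by force
    ultimately show "\<exists>U. open U \<and> x \<in> U \<and> U \<subseteq> - supp \<mu>" by blast
  qed
  then show ?thesis by (simp add: closed_def)
qed

lemma AE_in_supp:
  fixes \<mu> :: "'a::metric_space measure"
  assumes "separable_space TYPE('a)" and sets: "sets \<mu> = sets borel"
  shows "AE x in \<mu>. x \<in> supp \<mu>"
proof -
  obtain D :: "'a set" where "countable D" and D: "\<And>x e. e > 0 \<Longrightarrow> \<exists>d\<in>D. dist d x < e"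
    using separable_space_countable_dense[OF assms(1)] by blast
  define X where "X = {(d, q). d \<in> D \<and> q \<in> \<rat> \<and> emeasure \<mu> (ball d q) = 0}"
  have "countable X"
    using countable_SIGMA[OF \<open>countable D\<close> countable_rat] by (rule countable_subset[rotated]) (auto simp: X_def)
  then have null: "(\<Union>(d, q)\<in>X. ball d q) \<in> null_sets \<mu>"
    by (intro null_sets_UN') (auto simp: X_def sets null_sets_def)
  have "x \<in> (\<Union>(d, q)\<in>X. ball d q)" if "x \<notin> supp \<mu>" for x
  proof -
    obtain U where U: "open U" "x \<in> U" "emeasure \<mu> U = 0" using \<open>x \<notin> supp \<mu>\<close> unfolding supp_def by auto
    obtain r where "r > 0" "ball x r \<subseteq> U" using U open_contains_ball by blast
    obtain d where "d \<in> D" "dist d x < r / 2" using D[of "r / 2"] \<open>r > 0\<close> by auto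
    obtain q where q: "q \<in> \<rat>" "dist d x < q" "q < r / 2" using Rats_dense_in_real \<open>dist d x < r / 2\<close> by blast
    have "ball d q \<subseteq> ball x r"
    proof
      fix z assume "z \<in> ball d q"
      then show "z \<in> ball x r"
        using dist_triangle[of x z d] q \<open>dist d x < r / 2\<close> dist_commute[of x d] by simp
    qed
    then have "emeasure \<mu> (ball d q) = 0"
      using U \<open>ball x r \<subseteq> U\<close> sets by (metis emeasure_eq_0 sets.sets_into_space borel_open open_ball)
    then have "(d, q) \<in> X" using \<open>d \<in> D\<close> q unfolding X_def by auto
    then show ?thesis using q(2) by force
  qed
  then show ?thesis by (intro AE_I'[OF null]) auto
qed

lemma
  assumes "\<mu> \<in> W2"
  shows sets_W2: "sets \<mu> = sets borel" and prob_space_W2: "prob_space \<mu>"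
    and integrable_W2_norm_sq: "integrable \<mu> (\<lambda>x. (norm x)\<^sup>2)"
  using assms unfolding W2_def by auto

lemma measurable_W2: "\<mu> \<in> W2 \<Longrightarrow> measurable \<mu> N = measurable borel N"
  by (intro measurable_cong_sets) (simp_all add: sets_W2)

lemma borel_measurable_W2_continuous:
  "\<mu> \<in> W2 \<Longrightarrow> continuous_on UNIV f \<Longrightarrow> f \<in> borel_measurable \<mu>"
  by (simp add: measurable_W2 borel_measurable_continuous_onI)

lemma integrable_W2_norm_diff_sq:
  fixes \<mu> :: "'a::real_inner measure"
  assumes "\<mu> \<in> W2"
  shows "integrable \<mu> (\<lambda>x. (norm (x - a))\<^sup>2)"
proof (rule Bochner_Integration.integrable_bound)
  interpret prob_space \<mu> by (rule prob_space_W2[OF assms])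
  show "integrable \<mu> (\<lambda>x. 2 * (norm x)\<^sup>2 + 2 * (norm a)\<^sup>2)"
    using integrable_W2_norm_sq[OF assms] by simp
  show "(\<lambda>x. (norm (x - a))\<^sup>2) \<in> borel_measurable \<mu>"
    using assms by (intro borel_measurable_W2_continuous continuous_intros)
  have "(norm (x - a))\<^sup>2 \<le> 2 * (norm x)\<^sup>2 + 2 * (norm a)\<^sup>2" for x
  proof -
    have "(norm (x - a))\<^sup>2 \<le> (norm x + norm a)\<^sup>2"
      using norm_triangle_ineq4[of x a] by (simp add: power_mono)
    also have "\<dots> \<le> 2 * (norm x)\<^sup>2 + 2 * (norm a)\<^sup>2"
      using zero_le_power2[of "norm x - norm a"] unfolding power2_diff power2_sum by linarith
    finally show ?thesis .
  qed
  then show "AE x in \<mu>. norm ((norm (x - a))\<^sup>2) \<le> norm (2 * (norm x)\<^sup>2 + 2 * (norm a)\<^sup>2)"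
    by simp
qed

lemma integrable_W2_norm_diff:
  fixes \<mu> :: "'a::real_inner measure"
  assumes "\<mu> \<in> W2"
  shows "integrable \<mu> (\<lambda>x. norm (x - a))"
proof (rule Bochner_Integration.integrable_bound)
  interpret prob_space \<mu> by (rule prob_space_W2[OF assms])
  show "integrable \<mu> (\<lambda>x. 1 + (norm (x - a))\<^sup>2)"
    using integrable_W2_norm_diff_sq[OF assms] by simp
  show "(\<lambda>x. norm (x - a)) \<in> borel_measurable \<mu>"
    using assms by (intro borel_measurable_W2_continuous continuous_intros)
  have "t \<le> 1 + t\<^sup>2" for t :: real
  proof -
    have "0 \<le> (t - 1)\<^sup>2" by simp
    then have "2 * t \<le> 1 + t\<^sup>2" by (simp add: power2_diff)
    then show ?thesis using zero_le_power2[of t] by linarith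
  qed
  then show "AE x in \<mu>. norm (norm (x - a)) \<le> norm (1 + (norm (x - a))\<^sup>2)"
    by simp
qed

lemma integrable_W2_inner:
  fixes \<mu> :: "'a::real_inner measure"
  assumes "\<mu> \<in> W2"
  shows "integrable \<mu> (\<lambda>x. (x - a) \<bullet> z)"
proof (rule Bochner_Integration.integrable_bound)
  show "integrable \<mu> (\<lambda>x. norm (x - a) * norm z)"
    using integrable_W2_norm_diff[OF assms] by simp
  show "(\<lambda>x. (x - a) \<bullet> z) \<in> borel_measurable \<mu>"
    using assms by (intro borel_measurable_W2_continuous continuous_intros)
  show "AE x in \<mu>. norm ((x - a) \<bullet> z) \<le> norm (norm (x - a) * norm z)"
    by (simp add: Cauchy_Schwarz_ineq2)
qed

lemma bary_inner:
  fixes \<mu> :: "'a::{real_inner,complete_space} measure"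
  assumes "\<mu> \<in> W2"
  shows "bary \<mu> \<bullet> z = (\<integral>x. x \<bullet> z \<partial>\<mu>)"
proof -
  have int: "integrable \<mu> (\<lambda>x. x \<bullet> z)" for z
    using integrable_W2_inner[OF assms, of 0] by simp
  have "bounded_linear (\<lambda>z. \<integral>x. x \<bullet> z \<partial>\<mu>)"
  proof (rule bounded_linear_intro)
    show "(\<integral>x. x \<bullet> (y + z) \<partial>\<mu>) = (\<integral>x. x \<bullet> y \<partial>\<mu>) + (\<integral>x. x \<bullet> z \<partial>\<mu>)" for y z
      using int[of y] int[of z] by (simp add: inner_add_right)
    show "(\<integral>x. x \<bullet> (c *\<^sub>R z) \<partial>\<mu>) = c *\<^sub>R (\<integral>x. x \<bullet> z \<partial>\<mu>)" for c z
      by simp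
    show "norm (\<integral>x. x \<bullet> z \<partial>\<mu>) \<le> norm z * (\<integral>x. norm x \<partial>\<mu>)" for z
    proof -
      have "integrable \<mu> (\<lambda>x. norm x * norm z)"
        using integrable_W2_norm_diff[OF assms, of 0] by simp
      have "norm (\<integral>x. x \<bullet> z \<partial>\<mu>) \<le> (\<integral>x. norm (x \<bullet> z) \<partial>\<mu>)"
        by (rule integral_norm_bound)
      also have "\<dots> \<le> (\<integral>x. norm x * norm z \<partial>\<mu>)"
        using int[of z] \<open>integrable \<mu> (\<lambda>x. norm x * norm z)\<close>
        by (intro integral_mono) (simp_all add: Cauchy_Schwarz_ineq2)
      finally show ?thesis by (simp add: mult.commute)
    qed
  qed
  then obtain m where m: "\<And>z. m \<bullet> z = (\<integral>x. x \<bullet> z \<partial>\<mu>)"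
    using riesz_representation by blast
  have "bary \<mu> = m"
    unfolding bary_def
  proof (rule the_equality)
    fix m' assume m': "\<forall>z. m' \<bullet> z = (\<integral>x. x \<bullet> z \<partial>\<mu>)"
    have "(m' - m) \<bullet> (m' - m) = 0" using m m' by (simp add: inner_diff_left)
    then show "m' = m" by simp
  qed (use m in simp)
  then show ?thesis by (simp add: m)
qed

lemma integral_inner_diff_bary:
  fixes \<mu> :: "'a::{real_inner,complete_space} measure"
  assumes "\<mu> \<in> W2"
  shows "(\<integral>x. (x - a) \<bullet> z \<partial>\<mu>) = (bary \<mu> - a) \<bullet> z"
proof -
  interpret prob_space \<mu> by (rule prob_space_W2[OF assms])
  show ?thesis
    using integrable_W2_inner[OF assms, of 0 z]
    by (simp add: inner_diff_left bary_inner[OF assms] prob_space)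
qed

lemma bary_inner_eq_0_if_supp:
  fixes \<mu> :: "'a::{real_inner,complete_space} measure"
  assumes "separable_space TYPE('a)" "\<mu> \<in> W2" and orth: "\<And>x. x \<in> supp \<mu> \<Longrightarrow> (x - a) \<bullet> z = 0"
  shows "(bary \<mu> - a) \<bullet> z = 0"
proof -
  have "AE x in \<mu>. (x - a) \<bullet> z = 0"
    using AE_in_supp[OF assms(1) sets_W2[OF assms(2)]] by (auto simp: orth)
  then show ?thesis by (simp add: integral_eq_zero_AE integral_inner_diff_bary[OF assms(2), symmetric])
qed

section \<open>Couplings\<close>

lemma
  assumes "\<pi> \<in> couplings \<mu> \<nu>"
  shows sets_coupling: "sets \<pi> = sets (borel \<Otimes>\<^sub>M borel)" and prob_space_coupling: "prob_space \<pi>"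
    and distr_fst_coupling: "distr \<pi> borel fst = \<mu>" and distr_snd_coupling: "distr \<pi> borel snd = \<nu>"
  using assms unfolding couplings_def by auto

lemma measurable_coupling:
  "\<pi> \<in> couplings \<mu> \<nu> \<Longrightarrow> measurable \<pi> N = measurable (borel \<Otimes>\<^sub>M borel) N"
  by (intro measurable_cong_sets) (simp_all add: sets_coupling)

lemma
  fixes f :: "'a::real_inner \<Rightarrow> real"
  assumes \<pi>: "\<pi> \<in> couplings \<mu> \<nu>" and "f \<in> borel_measurable borel"
  shows has_bochner_integral_coupling_fst:
      "integrable \<mu> f \<Longrightarrow> has_bochner_integral \<pi> (\<lambda>p. f (fst p)) (\<integral>x. f x \<partial>\<mu>)"
    and has_bochner_integral_coupling_snd:
      "integrable \<nu> f \<Longrightarrow> has_bochner_integral \<pi> (\<lambda>p. f (snd p)) (\<integral>y. f y \<partial>\<nu>)"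
proof -
  have "fst \<in> measurable \<pi> borel" "snd \<in> measurable \<pi> borel"
    by (simp_all add: measurable_coupling[OF \<pi>])
  then show "integrable \<mu> f \<Longrightarrow> has_bochner_integral \<pi> (\<lambda>p. f (fst p)) (\<integral>x. f x \<partial>\<mu>)"
    "integrable \<nu> f \<Longrightarrow> has_bochner_integral \<pi> (\<lambda>p. f (snd p)) (\<integral>y. f y \<partial>\<nu>)"
    using integrable_distr_eq[of _ \<pi> borel f] integral_distr[of _ \<pi> borel f] assms(2)
    by (auto simp: has_bochner_integral_iff distr_fst_coupling[OF \<pi>, symmetric]
        distr_snd_coupling[OF \<pi>, symmetric])
qed

lemma nn_integral_coupling_fst:
  assumes \<pi>: "\<pi> \<in> couplings \<mu> \<nu>" and "f \<in> borel_measurable borel"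
  shows "(\<integral>\<^sup>+p. f (fst p) \<partial>\<pi>) = (\<integral>\<^sup>+x. f x \<partial>\<mu>)"
proof -
  have "(\<integral>\<^sup>+x. f x \<partial>distr \<pi> borel fst) = (\<integral>\<^sup>+p. f (fst p) \<partial>\<pi>)"
    by (rule nn_integral_distr) (simp_all add: measurable_coupling[OF \<pi>] assms(2))
  then show ?thesis by (simp add: distr_fst_coupling[OF \<pi>])
qed

lemma
  assumes \<pi>: "\<pi> \<in> couplings \<mu> \<nu>" and "{x. P x} \<in> sets borel"
  shows AE_coupling_fst: "(AE x in \<mu>. P x) \<Longrightarrow> (AE p in \<pi>. P (fst p))"
    and AE_coupling_snd: "(AE y in \<nu>. P y) \<Longrightarrow> (AE p in \<pi>. P (snd p))"
proof -
  have "(AE x in distr \<pi> borel fst. P x) \<longleftrightarrow> (AE p in \<pi>. P (fst p))"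
    "(AE y in distr \<pi> borel snd. P y) \<longleftrightarrow> (AE p in \<pi>. P (snd p))"
    by (rule AE_distr_iff; simp add: measurable_coupling[OF \<pi>] assms(2))+
  then show "(AE x in \<mu>. P x) \<Longrightarrow> (AE p in \<pi>. P (fst p))" "(AE y in \<nu>. P y) \<Longrightarrow> (AE p in \<pi>. P (snd p))"
    unfolding distr_fst_coupling[OF \<pi>] distr_snd_coupling[OF \<pi>] by simp_all
qed

lemma
  assumes "\<pi> \<in> couplings \<mu> \<nu>" "f \<in> measurable borel N"
  shows measurable_coupling_fst: "(\<lambda>p. f (fst p)) \<in> measurable \<pi> N"
    and measurable_coupling_snd: "(\<lambda>p. f (snd p)) \<in> measurable \<pi> N"
  using assms by (simp_all add: measurable_coupling measurable_compose[OF measurable_fst]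
      measurable_compose[OF measurable_snd])

lemma integrable_coupling_inner:
  fixes \<mu> \<nu> :: "'a::real_inner measure"
  assumes sep: "separable_space TYPE('a)" and W2: "\<mu> \<in> W2" "\<nu> \<in> W2" and \<pi>: "\<pi> \<in> couplings \<mu> \<nu>"
  shows "integrable \<pi> (\<lambda>p. (fst p - a) \<bullet> (snd p - b))"
proof (rule Bochner_Integration.integrable_bound)
  have sq: "(\<lambda>x. (norm (x - c))\<^sup>2) \<in> borel_measurable borel" for c :: 'a
    by (intro borel_measurable_continuous_onI continuous_intros)
  show "integrable \<pi> (\<lambda>p. (norm (fst p - a))\<^sup>2 + (norm (snd p - b))\<^sup>2)"
    using has_bochner_integral_coupling_fst[OF \<pi> sq integrable_W2_norm_diff_sq[OF W2(1)]]
      has_bochner_integral_coupling_snd[OF \<pi> sq integrable_W2_norm_diff_sq[OF W2(2)]]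
    by (simp add: has_bochner_integral_iff)
  show "(\<lambda>p. (fst p - a) \<bullet> (snd p - b)) \<in> borel_measurable \<pi>"
    by (intro borel_measurable_inner_separable[OF sep] measurable_coupling_fst[OF \<pi>]
        measurable_coupling_snd[OF \<pi>] borel_measurable_continuous_onI continuous_intros)
  have "\<bar>u \<bullet> v\<bar> \<le> (norm u)\<^sup>2 + (norm v)\<^sup>2" for u v :: 'a
  proof -
    have "0 \<le> (norm u - norm v)\<^sup>2" by simp
    then have "2 * (norm u * norm v) \<le> (norm u)\<^sup>2 + (norm v)\<^sup>2" by (simp add: power2_diff)
    then show ?thesis using Cauchy_Schwarz_ineq2[of u v] by (simp add: mult_nonneg_nonneg)
  qed
  then show "AE p in \<pi>. norm ((fst p - a) \<bullet> (snd p - b)) \<le> norm ((norm (fst p - a))\<^sup>2 + (norm (snd p - b))\<^sup>2)"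
    by simp
qed

definition total_variance :: "'a::real_inner measure \<Rightarrow> real" where
  "total_variance \<mu> = (\<integral>x. (norm (x - bary \<mu>))\<^sup>2 \<partial>\<mu>)"

definition coupling_cov :: "'a::real_inner measure \<Rightarrow> 'a measure \<Rightarrow> ('a \<times> 'a) measure \<Rightarrow> real" where
  "coupling_cov \<mu> \<nu> \<pi> = (\<integral>p. (fst p - bary \<mu>) \<bullet> (snd p - bary \<nu>) \<partial>\<pi>)"

lemma total_variance_nonneg: "0 \<le> total_variance \<mu>"
  unfolding total_variance_def by (rule integral_nonneg_AE) simp

lemma has_bochner_integral_coupling_cost:
  fixes \<mu> \<nu> :: "'a::{real_inner,complete_space} measure"
  assumes sep: "separable_space TYPE('a)" and W2: "\<mu> \<in> W2" "\<nu> \<in> W2" and \<pi>: "\<pi> \<in> couplings \<mu> \<nu>"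
  shows "has_bochner_integral \<pi> (\<lambda>p. (norm (fst p - snd p))\<^sup>2)
    ((norm (bary \<mu> - bary \<nu>))\<^sup>2 + total_variance \<mu> + total_variance \<nu> - 2 * coupling_cov \<mu> \<nu> \<pi>)"
proof -
  interpret prob_space \<pi> by (rule prob_space_coupling[OF \<pi>])
  let ?m = "bary \<mu>" and ?n = "bary \<nu>"
  define d where "d = ?m - ?n"
  have cont: "f \<in> borel_measurable borel" if "continuous_on UNIV f" for f :: "'a \<Rightarrow> real"
    using that by (rule borel_measurable_continuous_onI)
  have var_fst: "has_bochner_integral \<pi> (\<lambda>p. (norm (fst p - ?m))\<^sup>2) (total_variance \<mu>)"
    unfolding total_variance_def
    by (intro has_bochner_integral_coupling_fst[OF \<pi>] cont continuous_intros integrable_W2_norm_diff_sq W2)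
  have var_snd: "has_bochner_integral \<pi> (\<lambda>p. (norm (snd p - ?n))\<^sup>2) (total_variance \<nu>)"
    unfolding total_variance_def
    by (intro has_bochner_integral_coupling_snd[OF \<pi>] cont continuous_intros integrable_W2_norm_diff_sq W2)
  have cov: "has_bochner_integral \<pi> (\<lambda>p. (fst p - ?m) \<bullet> (snd p - ?n)) (coupling_cov \<mu> \<nu> \<pi>)"
    using integrable_coupling_inner[OF sep W2 \<pi>] by (simp add: has_bochner_integral_iff coupling_cov_def)
  have centered_fst: "has_bochner_integral \<pi> (\<lambda>p. (fst p - ?m) \<bullet> d) 0"
    using has_bochner_integral_coupling_fst[OF \<pi> cont integrable_W2_inner[OF W2(1), of ?m d]]
    by (simp add: integral_inner_diff_bary[OF W2(1)] continuous_intros)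
  have centered_snd: "has_bochner_integral \<pi> (\<lambda>p. (snd p - ?n) \<bullet> d) 0"
    using has_bochner_integral_coupling_snd[OF \<pi> cont integrable_W2_inner[OF W2(2), of ?n d]]
    by (simp add: integral_inner_diff_bary[OF W2(2)] continuous_intros)
  have expand: "(norm (fst p - snd p))\<^sup>2 = (norm d)\<^sup>2 + (norm (fst p - ?m))\<^sup>2 + (norm (snd p - ?n))\<^sup>2
      - 2 * ((fst p - ?m) \<bullet> (snd p - ?n)) + 2 * ((fst p - ?m) \<bullet> d) - 2 * ((snd p - ?n) \<bullet> d)" for p
  proof -
    have "fst p - snd p = (fst p - ?m) - (snd p - ?n) + d" unfolding d_def by simp
    then show ?thesis
      by (simp only: power2_norm_eq_inner inner_diff_left inner_diff_right inner_add_left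
          inner_add_right inner_commute) (simp add: algebra_simps)
  qed
  have "has_bochner_integral \<pi> (\<lambda>p. (norm d)\<^sup>2 + (norm (fst p - ?m))\<^sup>2 + (norm (snd p - ?n))\<^sup>2
      - 2 * ((fst p - ?m) \<bullet> (snd p - ?n)) + 2 * ((fst p - ?m) \<bullet> d) - 2 * ((snd p - ?n) \<bullet> d))
      ((norm d)\<^sup>2 + total_variance \<mu> + total_variance \<nu> - 2 * coupling_cov \<mu> \<nu> \<pi> + 2 * 0 - 2 * 0)"
    by (intro has_bochner_integral_diff has_bochner_integral_add has_bochner_integral_mult_right
        var_fst var_snd cov centered_fst centered_snd)
      (simp add: has_bochner_integral_iff prob_space)
  then show ?thesis
    by (subst has_bochner_integral_cong[OF refl expand refl]) (simp add: d_def)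
qed

lemma (in pair_sigma_finite)
  assumes [measurable]: "g \<in> borel_measurable (M1 \<Otimes>\<^sub>M M2)"
  shows emeasure_density_Times_space:
      "X \<in> sets M1 \<Longrightarrow> emeasure (density (M1 \<Otimes>\<^sub>M M2) g) (X \<times> space M2)
        = (\<integral>\<^sup>+x. (\<integral>\<^sup>+y. g (x, y) \<partial>M2) * indicator X x \<partial>M1)"
    and emeasure_density_space_Times:
      "Y \<in> sets M2 \<Longrightarrow> emeasure (density (M1 \<Otimes>\<^sub>M M2) g) (space M1 \<times> Y)
        = (\<integral>\<^sup>+y. (\<integral>\<^sup>+x. g (x, y) \<partial>M1) * indicator Y y \<partial>M2)"
proof -
  assume [measurable]: "X \<in> sets M1"
  have "emeasure (density (M1 \<Otimes>\<^sub>M M2) g) (X \<times> space M2)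
      = (\<integral>\<^sup>+p. g p * indicator (X \<times> space M2) p \<partial>(M1 \<Otimes>\<^sub>M M2))"
    by (rule emeasure_density) measurable
  also have "\<dots> = (\<integral>\<^sup>+x. \<integral>\<^sup>+y. g (x, y) * indicator (X \<times> space M2) (x, y) \<partial>M2 \<partial>M1)"
    by (rule M2.nn_integral_fst[symmetric]) measurable
  also have "\<dots> = (\<integral>\<^sup>+x. (\<integral>\<^sup>+y. g (x, y) \<partial>M2) * indicator X x \<partial>M1)"
    by (intro nn_integral_cong nn_integral_multc[symmetric]) (auto intro!: nn_integral_cong simp: indicator_def)
  finally show "emeasure (density (M1 \<Otimes>\<^sub>M M2) g) (X \<times> space M2)
      = (\<integral>\<^sup>+x. (\<integral>\<^sup>+y. g (x, y) \<partial>M2) * indicator X x \<partial>M1)" .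
next
  assume [measurable]: "Y \<in> sets M2"
  have "emeasure (density (M1 \<Otimes>\<^sub>M M2) g) (space M1 \<times> Y)
      = (\<integral>\<^sup>+p. g p * indicator (space M1 \<times> Y) p \<partial>(M1 \<Otimes>\<^sub>M M2))"
    by (rule emeasure_density) measurable
  also have "\<dots> = (\<integral>\<^sup>+y. \<integral>\<^sup>+x. g (x, y) * indicator (space M1 \<times> Y) (x, y) \<partial>M1 \<partial>M2)"
    by (rule nn_integral_snd[symmetric]) measurable
  also have "\<dots> = (\<integral>\<^sup>+y. (\<integral>\<^sup>+x. g (x, y) \<partial>M1) * indicator Y y \<partial>M2)"
    by (intro nn_integral_cong nn_integral_multc[symmetric]) (auto intro!: nn_integral_cong simp: indicator_def)
  finally show "emeasure (density (M1 \<Otimes>\<^sub>M M2) g) (space M1 \<times> Y)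
      = (\<integral>\<^sup>+y. (\<integral>\<^sup>+x. g (x, y) \<partial>M1) * indicator Y y \<partial>M2)" .
qed

lemma density_coupling:
  fixes \<mu> \<nu> :: "'a::real_inner measure" and g :: "'a \<times> 'a \<Rightarrow> ennreal"
  assumes "prob_space \<mu>" "prob_space \<nu>" and sets: "sets \<mu> = sets borel" "sets \<nu> = sets borel"
    and [measurable]: "g \<in> borel_measurable (\<mu> \<Otimes>\<^sub>M \<nu>)"
    and fst_marginal: "\<And>x. (\<integral>\<^sup>+y. g (x, y) \<partial>\<nu>) = 1"
    and snd_marginal: "\<And>y. (\<integral>\<^sup>+x. g (x, y) \<partial>\<mu>) = 1"
  shows "density (\<mu> \<Otimes>\<^sub>M \<nu>) g \<in> couplings \<mu> \<nu>"
proof -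
  interpret \<mu>: prob_space \<mu> by fact
  interpret \<nu>: prob_space \<nu> by fact
  interpret pair_prob_space \<mu> \<nu> by unfold_locales
  define \<pi> where "\<pi> = density (\<mu> \<Otimes>\<^sub>M \<nu>) g"
  have space: "space \<mu> = UNIV" "space \<nu> = UNIV"
    using sets_eq_imp_space_eq[OF sets(1)] sets_eq_imp_space_eq[OF sets(2)] by simp_all
  have sets_\<pi>: "sets \<pi> = sets (borel \<Otimes>\<^sub>M borel)"
    unfolding \<pi>_def using sets by (simp cong: sets_pair_measure_cong)
  have space_\<pi>: "space \<pi> = UNIV" by (simp add: \<pi>_def space_pair_measure space)
  have fst_emeasure: "emeasure \<pi> (X \<times> UNIV) = emeasure \<mu> X" if "X \<in> sets borel" for X
    using emeasure_density_Times_space[of g X] that unfolding \<pi>_def by (simp add: sets space fst_marginal)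
  have snd_emeasure: "emeasure \<pi> (UNIV \<times> Y) = emeasure \<nu> Y" if "Y \<in> sets borel" for Y
    using emeasure_density_space_Times[of g Y] that unfolding \<pi>_def by (simp add: sets space snd_marginal)
  have measurable_\<pi>: "measurable \<pi> borel = measurable (borel \<Otimes>\<^sub>M borel) borel"
    by (rule measurable_cong_sets[OF sets_\<pi> refl])
  have "distr \<pi> borel fst = \<mu>" "distr \<pi> borel snd = \<nu>"
    by (auto intro!: measure_eqI simp: sets emeasure_distr measurable_\<pi> space_\<pi> vimage_fst vimage_snd
        fst_emeasure snd_emeasure)
  moreover have "prob_space \<pi>"
    by (rule prob_spaceI) (use fst_emeasure[of UNIV] \<mu>.emeasure_space_1 in \<open>simp add: space_\<pi> space\<close>)
  ultimately show ?thesis using sets_\<pi> unfolding couplings_def \<pi>_def by auto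
qed

lemma product_coupling:
  fixes \<mu> \<nu> :: "'a::real_inner measure"
  assumes "prob_space \<mu>" "prob_space \<nu>" "sets \<mu> = sets borel" "sets \<nu> = sets borel"
  shows "\<mu> \<Otimes>\<^sub>M \<nu> \<in> couplings \<mu> \<nu>"
  using density_coupling[OF assms, of "\<lambda>_. 1"]
  by (simp add: density_1 prob_space.emeasure_space_1[OF assms(1)] prob_space.emeasure_space_1[OF assms(2)])

lemma integrable_product_cov_weighted:
  fixes \<mu> \<nu> :: "'a::real_inner measure" and \<phi> :: "'a \<times> 'a \<Rightarrow> real"
  assumes sep: "separable_space TYPE('a)" and W2: "\<mu> \<in> W2" "\<nu> \<in> W2"
    and "\<phi> \<in> borel_measurable (\<mu> \<Otimes>\<^sub>M \<nu>)" "\<And>p. \<bar>\<phi> p\<bar> \<le> 1"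
  shows "integrable (\<mu> \<Otimes>\<^sub>M \<nu>) (\<lambda>p. \<phi> p * ((fst p - a) \<bullet> (snd p - b)))"
proof -
  have \<pi>: "\<mu> \<Otimes>\<^sub>M \<nu> \<in> couplings \<mu> \<nu>"
    using W2 by (intro product_coupling prob_space_W2 sets_W2)
  note cov = integrable_coupling_inner[OF sep W2 \<pi>, of a b]
  show ?thesis
  proof (rule Bochner_Integration.integrable_bound[OF cov])
    show "(\<lambda>p. \<phi> p * ((fst p - a) \<bullet> (snd p - b))) \<in> borel_measurable (\<mu> \<Otimes>\<^sub>M \<nu>)"
      using assms(4) borel_measurable_integrable[OF cov] by (rule borel_measurable_times)
    show "AE p in \<mu> \<Otimes>\<^sub>M \<nu>. norm (\<phi> p * ((fst p - a) \<bullet> (snd p - b))) \<le> norm ((fst p - a) \<bullet> (snd p - b))"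
      using assms(5) by (simp add: abs_mult mult_left_le_one_le)
  qed
qed

lemma has_bochner_integral_product_cov_weighted:
  fixes \<mu> \<nu> :: "'a::{real_inner,complete_space} measure" and \<phi> :: "'a \<Rightarrow> real"
  assumes sep: "separable_space TYPE('a)" and W2: "\<mu> \<in> W2" "\<nu> \<in> W2"
    and \<phi>: "\<phi> \<in> borel_measurable borel" "\<And>x. \<bar>\<phi> x\<bar> \<le> 1"
  shows has_bochner_integral_product_cov_weighted_fst:
      "has_bochner_integral (\<mu> \<Otimes>\<^sub>M \<nu>) (\<lambda>p. \<phi> (fst p) * ((fst p - bary \<mu>) \<bullet> (snd p - bary \<nu>))) 0"
    and has_bochner_integral_product_cov_weighted_snd:
      "has_bochner_integral (\<mu> \<Otimes>\<^sub>M \<nu>) (\<lambda>p. \<phi> (snd p) * ((fst p - bary \<mu>) \<bullet> (snd p - bary \<nu>))) 0"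
proof -
  interpret \<mu>: prob_space \<mu> by (rule prob_space_W2[OF W2(1)])
  interpret \<nu>: prob_space \<nu> by (rule prob_space_W2[OF W2(2)])
  interpret pair_prob_space \<mu> \<nu> by unfold_locales
  let ?m = "bary \<mu>" and ?n = "bary \<nu>"
  have [measurable]: "\<phi> \<in> borel_measurable \<mu>" "\<phi> \<in> borel_measurable \<nu>"
    using \<phi>(1) by (simp_all add: measurable_W2[OF W2(1)] measurable_W2[OF W2(2)])
  have int_fst: "integrable (\<mu> \<Otimes>\<^sub>M \<nu>) (\<lambda>p. \<phi> (fst p) * ((fst p - ?m) \<bullet> (snd p - ?n)))"
    and int_snd: "integrable (\<mu> \<Otimes>\<^sub>M \<nu>) (\<lambda>p. \<phi> (snd p) * ((fst p - ?m) \<bullet> (snd p - ?n)))"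
    using \<phi> by (auto intro!: integrable_product_cov_weighted[OF sep W2])
  have "(\<integral>p. \<phi> (fst p) * ((fst p - ?m) \<bullet> (snd p - ?n)) \<partial>(\<mu> \<Otimes>\<^sub>M \<nu>))
      = (\<integral>x. \<integral>y. \<phi> x * ((y - ?n) \<bullet> (x - ?m)) \<partial>\<nu> \<partial>\<mu>)"
    using integral_fst'[OF int_fst] by (simp add: inner_commute)
  also have "\<dots> = 0"
    by (simp add: integral_inner_diff_bary[OF W2(2)])
  finally show "has_bochner_integral (\<mu> \<Otimes>\<^sub>M \<nu>) (\<lambda>p. \<phi> (fst p) * ((fst p - ?m) \<bullet> (snd p - ?n))) 0"
    using int_fst by (simp add: has_bochner_integral_iff)
  have "(\<integral>p. \<phi> (snd p) * ((fst p - ?m) \<bullet> (snd p - ?n)) \<partial>(\<mu> \<Otimes>\<^sub>M \<nu>))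
      = (\<integral>y. \<integral>x. \<phi> y * ((x - ?m) \<bullet> (y - ?n)) \<partial>\<mu> \<partial>\<nu>)"
    using integral_snd[of "\<lambda>x y. \<phi> y * ((x - ?m) \<bullet> (y - ?n))"] int_snd
    by (simp add: case_prod_beta')
  also have "\<dots> = 0"
    by (simp add: integral_inner_diff_bary[OF W2(1)])
  finally show "has_bochner_integral (\<mu> \<Otimes>\<^sub>M \<nu>) (\<lambda>p. \<phi> (snd p) * ((fst p - ?m) \<bullet> (snd p - ?n))) 0"
    using int_snd by (simp add: has_bochner_integral_iff)
qed

lemma coupling_cov_product:
  fixes \<mu> \<nu> :: "'a::{real_inner,complete_space} measure"
  assumes "separable_space TYPE('a)" "\<mu> \<in> W2" "\<nu> \<in> W2"
  shows "coupling_cov \<mu> \<nu> (\<mu> \<Otimes>\<^sub>M \<nu>) = 0"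
  using has_bochner_integral_product_cov_weighted_fst[OF assms, of "\<lambda>_. 1"]
  by (simp add: coupling_cov_def has_bochner_integral_iff)

lemma wdist_return:
  fixes \<mu> :: "'a::real_inner measure"
  assumes W2: "\<mu> \<in> W2"
  shows "wdist \<mu> (return borel a) = sqrt (\<integral>x. (norm (x - a))\<^sup>2 \<partial>\<mu>)"
proof -
  let ?\<delta> = "return borel a"
  have cost: "(\<integral>\<^sup>+p. ennreal ((norm (fst p - snd p))\<^sup>2) \<partial>\<pi>) = ennreal (\<integral>x. (norm (x - a))\<^sup>2 \<partial>\<mu>)"
    if \<pi>: "\<pi> \<in> couplings \<mu> ?\<delta>" for \<pi>
  proof -
    have "AE p in \<pi>. snd p = a"
      by (rule AE_coupling_snd[OF \<pi>]) (simp_all add: AE_return)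
    then have "(\<integral>\<^sup>+p. ennreal ((norm (fst p - snd p))\<^sup>2) \<partial>\<pi>) = (\<integral>\<^sup>+p. ennreal ((norm (fst p - a))\<^sup>2) \<partial>\<pi>)"
      by (intro nn_integral_cong_AE) auto
    also have "\<dots> = (\<integral>\<^sup>+x. ennreal ((norm (x - a))\<^sup>2) \<partial>\<mu>)"
      by (intro nn_integral_coupling_fst[OF \<pi>] measurable_compose[OF _ measurable_ennreal]
          borel_measurable_continuous_onI continuous_intros)
    also have "\<dots> = ennreal (\<integral>x. (norm (x - a))\<^sup>2 \<partial>\<mu>)"
      using integrable_W2_norm_diff_sq[OF W2] by (intro nn_integral_eq_integral) auto
    finally show ?thesis .
  qed
  have "couplings \<mu> ?\<delta> \<noteq> {}"
    using product_coupling[of \<mu> ?\<delta>] W2 by (auto simp: prob_space_W2 sets_W2 prob_space_return)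
  then show ?thesis unfolding wdist_def by (simp add: cost)
qed

lemma
  fixes \<mu> \<nu> :: "'a::{real_inner,complete_space} measure"
  assumes sep: "separable_space TYPE('a)" and W2: "\<mu> \<in> W2" "\<nu> \<in> W2" and \<pi>: "\<pi> \<in> couplings \<mu> \<nu>"
  defines "cost \<equiv> (norm (bary \<mu> - bary \<nu>))\<^sup>2 + total_variance \<mu> + total_variance \<nu> - 2 * coupling_cov \<mu> \<nu> \<pi>"
  shows coupling_cost_nonneg: "0 \<le> cost"
    and nn_integral_coupling_cost: "(\<integral>\<^sup>+p. ennreal ((norm (fst p - snd p))\<^sup>2) \<partial>\<pi>) = ennreal cost"
proof -
  from has_bochner_integral_coupling_cost[OF sep W2 \<pi>]
  have int: "integrable \<pi> (\<lambda>p. (norm (fst p - snd p))\<^sup>2)"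
    and eq: "(\<integral>p. (norm (fst p - snd p))\<^sup>2 \<partial>\<pi>) = cost"
    by (simp_all add: has_bochner_integral_iff cost_def)
  show "0 \<le> cost" unfolding eq[symmetric] by (rule integral_nonneg_AE) simp
  show "(\<integral>\<^sup>+p. ennreal ((norm (fst p - snd p))\<^sup>2) \<partial>\<pi>) = ennreal cost"
    using nn_integral_eq_integral[OF int] eq by simp
qed

lemma wdist_sq_eq_iff_coupling_cov_nonpos:
  fixes \<mu> \<nu> :: "'a::{real_inner,complete_space} measure"
  assumes sep: "separable_space TYPE('a)" and W2: "\<mu> \<in> W2" "\<nu> \<in> W2"
  shows "(wdist \<mu> \<nu>)\<^sup>2 = (norm (bary \<mu> - bary \<nu>))\<^sup>2 + total_variance \<mu> + total_variance \<nu>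
    \<longleftrightarrow> (\<forall>\<pi>\<in>couplings \<mu> \<nu>. coupling_cov \<mu> \<nu> \<pi> \<le> 0)"
    (is "_ = ?K \<longleftrightarrow> _")
proof -
  define cost where "cost \<pi> = ?K - 2 * coupling_cov \<mu> \<nu> \<pi>" for \<pi>
  have wdist_sq: "(wdist \<mu> \<nu>)\<^sup>2 = enn2real (INF \<pi>\<in>couplings \<mu> \<nu>. ennreal (cost \<pi>))"
    unfolding wdist_def cost_def by (simp add: nn_integral_coupling_cost[OF sep W2] cong: INF_cong)
  have product: "\<mu> \<Otimes>\<^sub>M \<nu> \<in> couplings \<mu> \<nu>" "cost (\<mu> \<Otimes>\<^sub>M \<nu>) = ?K"
    using W2 coupling_cov_product[OF sep W2]
    by (simp_all add: product_coupling prob_space_W2 sets_W2 cost_def)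
  show ?thesis
  proof
    assume "(wdist \<mu> \<nu>)\<^sup>2 = ?K"
    show "\<forall>\<pi>\<in>couplings \<mu> \<nu>. coupling_cov \<mu> \<nu> \<pi> \<le> 0"
    proof (rule ccontr)
      assume "\<not> ?thesis"
      then obtain \<pi> where \<pi>: "\<pi> \<in> couplings \<mu> \<nu>" "coupling_cov \<mu> \<nu> \<pi> > 0" by force
      have "(INF \<pi>\<in>couplings \<mu> \<nu>. ennreal (cost \<pi>)) \<le> ennreal (cost \<pi>)"
        by (rule INF_lower[OF \<pi>(1)])
      then have "(wdist \<mu> \<nu>)\<^sup>2 \<le> cost \<pi>"
        unfolding wdist_sq using enn2real_mono coupling_cost_nonneg[OF sep W2 \<pi>(1)]
        by (fastforce simp: cost_def)
      then show False using \<open>(wdist \<mu> \<nu>)\<^sup>2 = ?K\<close> \<pi>(2) by (simp add: cost_def)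
    qed
  next
    assume "\<forall>\<pi>\<in>couplings \<mu> \<nu>. coupling_cov \<mu> \<nu> \<pi> \<le> 0"
    then have "ennreal ?K \<le> (INF \<pi>\<in>couplings \<mu> \<nu>. ennreal (cost \<pi>))"
      by (intro INF_greatest ennreal_leI) (simp add: cost_def)
    then have "(INF \<pi>\<in>couplings \<mu> \<nu>. ennreal (cost \<pi>)) = ennreal ?K"
      using INF_lower[OF product(1), of "\<lambda>\<pi>. ennreal (cost \<pi>)"] product(2)
      by (intro order_antisym) simp_all
    then show "(wdist \<mu> \<nu>)\<^sup>2 = ?K"
      unfolding wdist_sq using total_variance_nonneg[of \<mu>] total_variance_nonneg[of \<nu>]
      by (simp del: ennreal_plus)
  qed
qed

section \<open>Couplings with positive cross covariance\<close>

lemma (in prob_space) nn_integral_one_plus_centered_indicator: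
  assumes "B \<in> events" and nonneg: "\<And>x. 0 \<le> 1 + c * (indicator B x - prob B)"
  shows "(\<integral>\<^sup>+x. ennreal (1 + c * (indicator B x - prob B)) \<partial>M) = 1"
proof -
  have "integrable M (indicator B :: _ \<Rightarrow> real)"
    using assms(1) by (intro integrable_real_indicator) (simp_all add: less_top[symmetric])
  then have "has_bochner_integral M (\<lambda>x. 1 + c * (indicator B x - prob B)) (1 + c * (prob B - prob B))"
    using assms(1) by (intro has_bochner_integral_add has_bochner_integral_mult_right has_bochner_integral_diff)
      (simp_all add: has_bochner_integral_iff prob_space Int_absorb2 sets.sets_into_space)
  then show ?thesis
    using nonneg by (simp add: has_bochner_integral_iff nn_integral_eq_integral)
qed

lemma one_plus_perturbation_nonneg:
  fixes \<theta> \<alpha> \<beta> :: real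
  assumes "\<bar>\<theta>\<bar> \<le> 1" "0 \<le> \<alpha>" "\<alpha> \<le> 1" "0 \<le> \<beta>" "\<beta> \<le> 1"
  shows "0 \<le> 1 + \<theta> * (indicator A x - \<alpha>) * (indicator B y - \<beta>)"
proof -
  have "\<bar>\<theta> * (indicator A x - \<alpha>) * (indicator B y - \<beta>)\<bar> \<le> 1 * 1 * 1"
    unfolding abs_mult using assms by (intro mult_mono) (auto simp: indicator_def)
  then show ?thesis by linarith
qed

lemma perturbed_product_coupling:
  fixes \<mu> \<nu> :: "'a::real_inner measure"
  assumes "prob_space \<mu>" "prob_space \<nu>" and sets: "sets \<mu> = sets borel" "sets \<nu> = sets borel"
    and AB: "A \<in> sets borel" "B \<in> sets borel" and "\<bar>\<theta>\<bar> \<le> 1"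
  shows "density (\<mu> \<Otimes>\<^sub>M \<nu>) (\<lambda>p. ennreal (1 + \<theta> * (indicator A (fst p) - measure \<mu> A)
      * (indicator B (snd p) - measure \<nu> B))) \<in> couplings \<mu> \<nu>"
proof -
  interpret \<mu>: prob_space \<mu> by fact
  interpret \<nu>: prob_space \<nu> by fact
  have [measurable]: "A \<in> sets \<mu>" "B \<in> sets \<nu>" using sets AB by simp_all
  have nonneg: "0 \<le> 1 + \<theta> * (indicator A x - \<mu>.prob A) * (indicator B y - \<nu>.prob B)" for x y
    using \<open>\<bar>\<theta>\<bar> \<le> 1\<close> by (intro one_plus_perturbation_nonneg) auto
  have "(\<integral>\<^sup>+y. ennreal (1 + \<theta> * (indicator A x - \<mu>.prob A) * (indicator B y - \<nu>.prob B)) \<partial>\<nu>) = 1" for x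
    by (rule \<nu>.nn_integral_one_plus_centered_indicator) (simp_all add: nonneg)
  moreover have "(\<integral>\<^sup>+x. ennreal (1 + \<theta> * (indicator A x - \<mu>.prob A) * (indicator B y - \<nu>.prob B)) \<partial>\<mu>) = 1" for y
    using \<mu>.nn_integral_one_plus_centered_indicator[of A "\<theta> * (indicator B y - \<nu>.prob B)"] nonneg[of _ y]
    by (simp add: ac_simps)
  ultimately show ?thesis
    by (intro density_coupling assms) simp_all
qed

lemma coupling_cov_perturbed_product:
  fixes \<mu> \<nu> :: "'a::{real_inner,complete_space} measure"
  assumes sep: "separable_space TYPE('a)" and W2: "\<mu> \<in> W2" "\<nu> \<in> W2"
    and AB: "A \<in> sets borel" "B \<in> sets borel" and \<theta>: "\<bar>\<theta>\<bar> \<le> 1"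
  shows "coupling_cov \<mu> \<nu> (density (\<mu> \<Otimes>\<^sub>M \<nu>) (\<lambda>p. ennreal (1 + \<theta> * (indicator A (fst p) - measure \<mu> A)
      * (indicator B (snd p) - measure \<nu> B))))
    = \<theta> * (\<integral>p. indicator A (fst p) * indicator B (snd p) * ((fst p - bary \<mu>) \<bullet> (snd p - bary \<nu>)) \<partial>(\<mu> \<Otimes>\<^sub>M \<nu>))"
    (is "_ = \<theta> * ?J")
proof -
  let ?\<alpha> = "measure \<mu> A" and ?\<beta> = "measure \<nu> B"
  define f where "f p = (fst p - bary \<mu>) \<bullet> (snd p - bary \<nu>)" for p :: "'a \<times> 'a"
  define g where "g p = 1 + \<theta> * (indicator A (fst p) - ?\<alpha>) * (indicator B (snd p) - ?\<beta>)" for p :: "'a \<times> 'a"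
  have [measurable]: "A \<in> sets \<mu>" "B \<in> sets \<nu>" using AB by (simp_all add: sets_W2[OF W2(1)] sets_W2[OF W2(2)])
  have g_nonneg: "0 \<le> g p" for p
    unfolding g_def using \<theta> prob_space.prob_le_1[OF prob_space_W2[OF W2(1)]]
      prob_space.prob_le_1[OF prob_space_W2[OF W2(2)]] by (intro one_plus_perturbation_nonneg) auto
  have f_integrable: "integrable (\<mu> \<Otimes>\<^sub>M \<nu>) (\<lambda>p. \<phi> p * f p)"
    if "\<phi> \<in> borel_measurable (\<mu> \<Otimes>\<^sub>M \<nu>)" "\<And>p. \<bar>\<phi> p\<bar> \<le> 1" for \<phi>
    unfolding f_def by (rule integrable_product_cov_weighted[OF sep W2 that])
  note zero_fst = has_bochner_integral_product_cov_weighted_fst[OF sep W2, folded f_def]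
  note zero_snd = has_bochner_integral_product_cov_weighted_snd[OF sep W2, folded f_def]
  have "has_bochner_integral (\<mu> \<Otimes>\<^sub>M \<nu>) (\<lambda>p. 1 * f p + \<theta> * (indicator A (fst p) * indicator B (snd p) * f p)
      - \<theta> * ?\<beta> * (indicator A (fst p) * f p) - \<theta> * ?\<alpha> * (indicator B (snd p) * f p) + \<theta> * ?\<alpha> * ?\<beta> * (1 * f p))
    (0 + \<theta> * ?J - \<theta> * ?\<beta> * 0 - \<theta> * ?\<alpha> * 0 + \<theta> * ?\<alpha> * ?\<beta> * 0)"
    using AB f_integrable[of "\<lambda>p. indicator A (fst p) * indicator B (snd p)"]
    by (intro has_bochner_integral_add has_bochner_integral_diff has_bochner_integral_mult_right
        zero_fst zero_snd) (auto simp: has_bochner_integral_iff f_def indicator_def)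
  then have "has_bochner_integral (\<mu> \<Otimes>\<^sub>M \<nu>) (\<lambda>p. g p *\<^sub>R f p) (\<theta> * ?J)"
    by (subst has_bochner_integral_cong[OF refl _ refl, where g="\<lambda>p. g p * f p"])
      (simp_all add: g_def algebra_simps)
  moreover have "coupling_cov \<mu> \<nu> (density (\<mu> \<Otimes>\<^sub>M \<nu>) (\<lambda>p. ennreal (g p))) = (\<integral>p. g p *\<^sub>R f p \<partial>(\<mu> \<Otimes>\<^sub>M \<nu>))"
    unfolding coupling_cov_def f_def[symmetric]
    using f_integrable[of "\<lambda>_. 1"] g_nonneg
    by (intro integral_density) (auto simp: g_def dest: borel_measurable_integrable)
  ultimately show ?thesis by (simp add: has_bochner_integral_iff g_def)
qed

lemma integral_pos_if_pos_on_set: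
  fixes f :: "'a \<Rightarrow> real"
  assumes f: "integrable M f" "\<And>x. 0 \<le> f x" and S: "S \<in> sets M" "emeasure M S \<noteq> 0"
    and pos: "\<And>x. x \<in> S \<Longrightarrow> 0 < f x"
  shows "0 < integral\<^sup>L M f"
proof -
  have "integral\<^sup>L M f \<noteq> 0"
  proof
    assume "integral\<^sup>L M f = 0"
    then have "AE x in M. f x = 0" using integral_nonneg_eq_0_iff_AE[OF f(1)] f(2) by simp
    then have "AE x in M. x \<notin> S" by eventually_elim (use pos in fastforce)
    moreover have "{x \<in> space M. x \<in> S} = S" using S(1) sets.sets_into_space by blast
    ultimately show False using S by (simp add: AE_iff_measurable[OF _ refl])
  qed
  then show ?thesis using integral_nonneg_AE[of f M] f(2) by (simp add: order_less_le)
qed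

text \<open>The witness perturbs the product coupling by the density
  \<open>1 + \<theta> (1\<^sub>A(x) - \<mu> A) (1\<^sub>B(y) - \<nu> B)\<close>, which keeps both marginals; \<open>A \<times> B\<close> is a
  neighbourhood of \<open>(x0, y0)\<close> on which \<open>\<theta> (x - m(\<mu>)) \<bullet> (y - m(\<nu>)) > 0\<close>.\<close>

lemma exists_coupling_cov_pos:
  fixes \<mu> \<nu> :: "'a::{real_inner,complete_space} measure"
  assumes sep: "separable_space TYPE('a)" and W2: "\<mu> \<in> W2" "\<nu> \<in> W2"
    and supp: "x0 \<in> supp \<mu>" "y0 \<in> supp \<nu>" and "(x0 - bary \<mu>) \<bullet> (y0 - bary \<nu>) \<noteq> 0"
  shows "\<exists>\<pi>\<in>couplings \<mu> \<nu>. coupling_cov \<mu> \<nu> \<pi> > 0"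
proof -
  interpret \<mu>: prob_space \<mu> by (rule prob_space_W2[OF W2(1)])
  interpret \<nu>: prob_space \<nu> by (rule prob_space_W2[OF W2(2)])
  interpret pair_prob_space \<mu> \<nu> by unfold_locales
  define f where "f p = (fst p - bary \<mu>) \<bullet> (snd p - bary \<nu>)" for p :: "'a \<times> 'a"
  define \<theta> where "\<theta> = sgn (f (x0, y0))"
  have \<theta>: "\<bar>\<theta>\<bar> \<le> 1" "0 < \<theta> * f (x0, y0)"
    using assms(6) by (auto simp: \<theta>_def f_def sgn_real_def)
  have "open {p. 0 < \<theta> * f p}"
    unfolding f_def by (intro open_Collect_less continuous_intros)
  then obtain A B where AB: "open A" "open B" "(x0, y0) \<in> A \<times> B" "A \<times> B \<subseteq> {p. 0 < \<theta> * f p}"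
    using \<theta>(2) by (metis mem_Collect_eq open_prod_elim)
  have [measurable]: "A \<in> sets \<mu>" "B \<in> sets \<nu>"
    using AB by (simp_all add: sets_W2[OF W2(1)] sets_W2[OF W2(2)])
  have "emeasure \<mu> A > 0" "emeasure \<nu> B > 0"
    using supp AB unfolding supp_def by auto
  then have "emeasure (\<mu> \<Otimes>\<^sub>M \<nu>) (A \<times> B) \<noteq> 0"
    by (simp add: \<nu>.emeasure_pair_measure_Times less_le)
  moreover have "integrable (\<mu> \<Otimes>\<^sub>M \<nu>) (\<lambda>p. \<theta> * (indicator A (fst p) * indicator B (snd p) * f p))"
    using integrable_product_cov_weighted[OF sep W2, of "\<lambda>p. indicator A (fst p) * indicator B (snd p)"]
    unfolding f_def by (auto simp: indicator_def)
  ultimately have "0 < (\<integral>p. \<theta> * (indicator A (fst p) * indicator B (snd p) * f p) \<partial>(\<mu> \<Otimes>\<^sub>M \<nu>))"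
    using AB(4) by (intro integral_pos_if_pos_on_set[where S="A \<times> B"]) (auto simp: indicator_def less_imp_le)
  also have "\<dots> = coupling_cov \<mu> \<nu> (density (\<mu> \<Otimes>\<^sub>M \<nu>)
      (\<lambda>p. ennreal (1 + \<theta> * (indicator A (fst p) - measure \<mu> A) * (indicator B (snd p) - measure \<nu> B))))"
    using AB unfolding f_def by (simp add: coupling_cov_perturbed_product[OF sep W2 _ _ \<theta>(1)])
  moreover have "density (\<mu> \<Otimes>\<^sub>M \<nu>) (\<lambda>p. ennreal (1 + \<theta> * (indicator A (fst p) - measure \<mu> A)
      * (indicator B (snd p) - measure \<nu> B))) \<in> couplings \<mu> \<nu>"
    using AB W2 \<theta>(1) by (intro perturbed_product_coupling prob_space_W2 sets_W2) simp_all
  ultimately show ?thesis by auto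
qed

lemma coupling_cov_eq_0_if_supp_orth:
  fixes \<mu> \<nu> :: "'a::{real_inner,complete_space} measure"
  assumes sep: "separable_space TYPE('a)" and W2: "\<mu> \<in> W2" "\<nu> \<in> W2" and \<pi>: "\<pi> \<in> couplings \<mu> \<nu>"
    and orth: "\<And>x y. x \<in> supp \<mu> \<Longrightarrow> y \<in> supp \<nu> \<Longrightarrow> (x - bary \<mu>) \<bullet> (y - bary \<nu>) = 0"
  shows "coupling_cov \<mu> \<nu> \<pi> = 0"
proof -
  have supp_borel: "{x. x \<in> supp \<rho>} \<in> sets borel" for \<rho> :: "'a measure"
    using closed_supp[of \<rho>] by (simp add: borel_closed)
  have "AE p in \<pi>. fst p \<in> supp \<mu>"
    using AE_coupling_fst[OF \<pi> supp_borel AE_in_supp[OF sep sets_W2[OF W2(1)]]] .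
  moreover have "AE p in \<pi>. snd p \<in> supp \<nu>"
    using AE_coupling_snd[OF \<pi> supp_borel AE_in_supp[OF sep sets_W2[OF W2(2)]]] .
  ultimately have "AE p in \<pi>. (fst p - bary \<mu>) \<bullet> (snd p - bary \<nu>) = 0"
    by (auto simp: orth)
  then show ?thesis unfolding coupling_cov_def by (rule integral_eq_zero_AE)
qed

lemma coupling_cov_nonpos_iff_supp_orth:
  fixes \<mu> \<nu> :: "'a::{real_inner,complete_space} measure"
  assumes "separable_space TYPE('a)" "\<mu> \<in> W2" "\<nu> \<in> W2"
  shows "(\<forall>\<pi>\<in>couplings \<mu> \<nu>. coupling_cov \<mu> \<nu> \<pi> \<le> 0) \<longleftrightarrow>
    (\<forall>x\<in>supp \<mu>. \<forall>y\<in>supp \<nu>. (x - bary \<mu>) \<bullet> (y - bary \<nu>) = 0)"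
proof
  assume "\<forall>\<pi>\<in>couplings \<mu> \<nu>. coupling_cov \<mu> \<nu> \<pi> \<le> 0"
  then show "\<forall>x\<in>supp \<mu>. \<forall>y\<in>supp \<nu>. (x - bary \<mu>) \<bullet> (y - bary \<nu>) = 0"
    using exists_coupling_cov_pos[OF assms] by (meson not_le)
next
  assume "\<forall>x\<in>supp \<mu>. \<forall>y\<in>supp \<nu>. (x - bary \<mu>) \<bullet> (y - bary \<nu>) = 0"
  then show "\<forall>\<pi>\<in>couplings \<mu> \<nu>. coupling_cov \<mu> \<nu> \<pi> \<le> 0"
    using coupling_cov_eq_0_if_supp_orth[OF assms] by simp
qed

section \<open>Orthogonal affine subspaces\<close>

lemma closed_orthogonal_comp: "closed (orthogonal_comp W)"
proof -
  have "orthogonal_comp W = (\<Inter>w\<in>W. {x. w \<bullet> x = 0})"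
    by (auto simp: orthogonal_comp_def orthogonal_def)
  then show ?thesis by (simp add: closed_INT closed_Collect_eq continuous_on_inner continuous_on_const continuous_on_id)
qed

lemma orthogonal_affine_subspaces_if_orth:
  fixes X Y :: "'a::real_inner set"
  assumes orth: "\<And>x y. x \<in> X \<Longrightarrow> y \<in> Y \<Longrightarrow> (x - m) \<bullet> (y - n) = 0"
  shows "\<exists>L0 M0. subspace L0 \<and> closed L0 \<and> subspace M0 \<and> closed M0 \<and> (\<forall>u\<in>L0. \<forall>v\<in>M0. u \<bullet> v = 0) \<and>
    X \<subseteq> (\<lambda>x. m + x) ` L0 \<and> Y \<subseteq> (\<lambda>x. n + x) ` M0"
proof -
  define L0 where "L0 = orthogonal_comp ((\<lambda>y. y - n) ` Y)"
  have "x - m \<in> L0" if "x \<in> X" for x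
    using orth[OF that] by (auto simp: L0_def orthogonal_comp_def orthogonal_def inner_commute)
  then have "X \<subseteq> (\<lambda>x. m + x) ` L0"
    by (metis add.commute diff_add_cancel image_eqI subsetI)
  moreover have "y - n \<in> orthogonal_comp L0" if "y \<in> Y" for y
    unfolding L0_def by (rule subsetD[OF orthogonal_comp_subset]) (use that in simp)
  then have "Y \<subseteq> (\<lambda>x. n + x) ` orthogonal_comp L0"
    by (metis add.commute diff_add_cancel image_eqI subsetI)
  moreover have "\<forall>u\<in>L0. \<forall>v\<in>orthogonal_comp L0. u \<bullet> v = 0"
    by (simp add: orthogonal_comp_def orthogonal_def)
  ultimately show ?thesis
    unfolding L0_def by (metis subspace_orthogonal_comp closed_orthogonal_comp)
qed

lemma supp_orth_if_orthogonal_affine_subspaces: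
  fixes \<mu> \<nu> :: "'a::{real_inner,complete_space} measure"
  assumes sep: "separable_space TYPE('a)" and W2: "\<mu> \<in> W2" "\<nu> \<in> W2"
    and orth: "\<forall>u\<in>L0. \<forall>v\<in>M0. u \<bullet> v = 0"
    and supp: "supp \<mu> \<subseteq> (\<lambda>x. a + x) ` L0" "supp \<nu> \<subseteq> (\<lambda>x. b + x) ` M0"
    and x: "x \<in> supp \<mu>" and y: "y \<in> supp \<nu>"
  shows "(x - bary \<mu>) \<bullet> (y - bary \<nu>) = 0"
proof -
  let ?m = "bary \<mu>" and ?n = "bary \<nu>"
  have supp_orth: "(x - a) \<bullet> (y - b) = 0" if x: "x \<in> supp \<mu>" and y: "y \<in> supp \<nu>" for x y
  proof -
    obtain u where "u \<in> L0" "x = a + u" using x supp(1) by blast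
    moreover obtain v where "v \<in> M0" "y = b + v" using y supp(2) by blast
    ultimately show ?thesis using orth by simp
  qed
  have n_orth: "(x - a) \<bullet> (?n - b) = 0" if "x \<in> supp \<mu>" for x
    using bary_inner_eq_0_if_supp[OF sep W2(2), of b "x - a"] supp_orth[OF that]
    by (simp add: inner_commute)
  have m_orth: "(?m - a) \<bullet> (y - b) = 0" if "y \<in> supp \<nu> \<or> y = ?n" for y
    using that by (intro bary_inner_eq_0_if_supp[OF sep W2(1)]) (auto simp: supp_orth n_orth)
  have "(x - ?m) \<bullet> (y - ?n) = (x - a) \<bullet> (y - b) - (x - a) \<bullet> (?n - b) - (?m - a) \<bullet> (y - b) + (?m - a) \<bullet> (?n - b)"
    by (simp add: inner_diff_left inner_diff_right)
  then show ?thesis using supp_orth[OF x y] n_orth[OF x] m_orth y by simp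
qed

lemma supp_orth_iff_orthogonal_affine_subspaces:
  fixes \<mu> \<nu> :: "'a::{real_inner,complete_space} measure"
  assumes sep: "separable_space TYPE('a)" and W2: "\<mu> \<in> W2" "\<nu> \<in> W2"
  shows "(\<forall>x\<in>supp \<mu>. \<forall>y\<in>supp \<nu>. (x - bary \<mu>) \<bullet> (y - bary \<nu>) = 0) \<longleftrightarrow>
    (\<exists>a b L0 M0. subspace L0 \<and> closed L0 \<and> subspace M0 \<and> closed M0 \<and>
       (\<forall>u\<in>L0. \<forall>v\<in>M0. u \<bullet> v = 0) \<and>
       supp \<mu> \<subseteq> (\<lambda>x. a + x) ` L0 \<and> supp \<nu> \<subseteq> (\<lambda>x. b + x) ` M0)"
proof
  assume "\<forall>x\<in>supp \<mu>. \<forall>y\<in>supp \<nu>. (x - bary \<mu>) \<bullet> (y - bary \<nu>) = 0"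
  then have "\<exists>L0 M0. subspace L0 \<and> closed L0 \<and> subspace M0 \<and> closed M0 \<and> (\<forall>u\<in>L0. \<forall>v\<in>M0. u \<bullet> v = 0) \<and>
      supp \<mu> \<subseteq> (\<lambda>x. bary \<mu> + x) ` L0 \<and> supp \<nu> \<subseteq> (\<lambda>x. bary \<nu> + x) ` M0"
    by (intro orthogonal_affine_subspaces_if_orth) simp
  then show "\<exists>a b L0 M0. subspace L0 \<and> closed L0 \<and> subspace M0 \<and> closed M0 \<and>
      (\<forall>u\<in>L0. \<forall>v\<in>M0. u \<bullet> v = 0) \<and> supp \<mu> \<subseteq> (\<lambda>x. a + x) ` L0 \<and> supp \<nu> \<subseteq> (\<lambda>x. b + x) ` M0"
    by blast
next
  assume "\<exists>a b L0 M0. subspace L0 \<and> closed L0 \<and> subspace M0 \<and> closed M0 \<and>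
      (\<forall>u\<in>L0. \<forall>v\<in>M0. u \<bullet> v = 0) \<and> supp \<mu> \<subseteq> (\<lambda>x. a + x) ` L0 \<and> supp \<nu> \<subseteq> (\<lambda>x. b + x) ` M0"
  then obtain a b L0 M0 where "\<forall>u\<in>L0. \<forall>v\<in>M0. u \<bullet> v = 0"
    "supp \<mu> \<subseteq> (\<lambda>x. a + x) ` L0" "supp \<nu> \<subseteq> (\<lambda>x. b + x) ` M0"
    by blast
  then show "\<forall>x\<in>supp \<mu>. \<forall>y\<in>supp \<nu>. (x - bary \<mu>) \<bullet> (y - bary \<nu>) = 0"
    using supp_orth_if_orthogonal_affine_subspaces[OF sep W2] by blast
qed

theorem lemma3p15:
  fixes \<mu> \<nu> :: "'a::{real_inner, complete_space} measure"
  assumes "separable_space TYPE('a)"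
    and "infinite_dimensional TYPE('a)"
    and "\<mu> \<in> W2" and "\<nu> \<in> W2"
  defines "\<sigma> \<equiv> wdist \<mu> (return borel (bary \<mu>))"
    and "\<rho> \<equiv> wdist \<nu> (return borel (bary \<nu>))"
  shows "(wdist \<mu> \<nu>)^2 = (norm (bary \<mu> - bary \<nu>))^2 + \<sigma>^2 + \<rho>^2 \<longleftrightarrow>
    (\<exists>a b L0 M0. subspace L0 \<and> closed L0 \<and> subspace M0 \<and> closed M0 \<and>
       (\<forall>u\<in>L0. \<forall>v\<in>M0. u \<bullet> v = 0) \<and>
       supp \<mu> \<subseteq> (\<lambda>x. a + x) ` L0 \<and> supp \<nu> \<subseteq> (\<lambda>x. b + x) ` M0)"
proof -
  note sep = assms(1) and W2 = assms(3,4)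
  have "\<sigma>\<^sup>2 = total_variance \<mu>" "\<rho>\<^sup>2 = total_variance \<nu>"
    unfolding \<sigma>_def \<rho>_def wdist_return[OF W2(1)] wdist_return[OF W2(2)]
    using total_variance_nonneg by (simp_all add: total_variance_def)
  then show ?thesis
    using wdist_sq_eq_iff_coupling_cov_nonpos[OF sep W2] coupling_cov_nonpos_iff_supp_orth[OF sep W2]
      supp_orth_iff_orthogonal_affine_subspaces[OF sep W2]
    by simp
qed

end
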